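(* Fix positive integers $m_1,m_2,m_3$. Let $A_1$ be an $m_1\times m_1$ coloring matrix, $A_2$ an $m_1\times m_2$ matrix with entries in $\{0,1\}$, and $B=(b_{ij})$ an $m_3\times m_2$ matrix with entries in $\{0,1\}$. Let $$A=\left[\begin{array}{c|c}A_1&A_2\\\hline0&0\end{array}\right],\qquad A'=\left[\begin{array}{c|c|c}A_1&A_2&0\\\hline0&0&0\\\hline0&B&0\end{array}\right],$$ where the $0$'s are zero blocks of the sizes making $A$ an $(m_1+m_2)\times(m_1+m_2)$ matrix and $A'$ an $(m_1+m_2+m_3)\times(m_1+m_2+m_3)$ matrix. Then $$F_{A'}(x)=F_A(x)+x\sum_{i=1}^{m_3}\frac{1}{1-x\sum_{j=1}^{m_2}b_{ij}}.$$ In particular, for $1\le i\le m_1+m_2$ we have $t^{(i)}_{A'}(n)=t^{(i)}_A(n)$ for all $n\ge1$, and for $m_1+m_2<i\le m_1+m_2+m_3$ we have $$t^{(i)}_{A'}(n)=\Big(\sum_{j=1}^{m_2}b_{i-m_1-m_2,j}\Big)^{n-1}$$ for all $n\ge1$.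
   Context: A plane tree is an unlabeled rooted tree in which the children of every vertex are linearly ordered. A coloring matrix is a square matrix $A=(a_{ij})$ with entries in $\{0,1\}$. An $A$-coloring of a plane tree assigns to each vertex a color (an index of a row of $A$) such that whenever a vertex of color $j$ is a child of a vertex of color $i$, $a_{ij}=1$. Let $t_A(n)$ be the number of pairs (plane tree with $n$ vertices, $A$-coloring of it), $t_A^{(i)}(n)$ the number of those with root color $i$, and $F_A(x)=\sum_{n\ge1}t_A(n)x^n$. *)

theory Defs
  imports "HOL-Computational_Algebra.Formal_Power_Series"
begin

text \<open>A plane tree together with a coloring of its vertices is represented as a
  colored plane tree: a node carries its color and the ordered list of its subtrees.
  Colors are 0-based: a coloring matrix of size m is a function
  nat \<Rightarrow> nat \<Rightarrow> nat whose entries at indices below m are in {0,1};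
  colors are the numbers below m.\<close>

datatype ctree = CNode nat "ctree list"

fun root_color :: "ctree \<Rightarrow> nat" where
  "root_color (CNode c ts) = c"

fun csize :: "ctree \<Rightarrow> nat" where
  "csize (CNode c ts) = Suc (sum_list (map csize ts))"

fun valid_coloring :: "nat \<Rightarrow> (nat \<Rightarrow> nat \<Rightarrow> nat) \<Rightarrow> ctree \<Rightarrow> bool" where
  "valid_coloring m A (CNode c ts) =
     (c < m \<and> (\<forall>t\<in>set ts. A c (root_color t) = 1 \<and> valid_coloring m A t))"

definition is_coloring_matrix :: "nat \<Rightarrow> (nat \<Rightarrow> nat \<Rightarrow> nat) \<Rightarrow> bool" where
  "is_coloring_matrix m A \<longleftrightarrow> (\<forall>i<m. \<forall>j<m. A i j \<in> {0,1})"

definition tA :: "nat \<Rightarrow> (nat \<Rightarrow> nat \<Rightarrow> nat) \<Rightarrow> nat \<Rightarrow> nat" where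
  "tA m A n = card {T. valid_coloring m A T \<and> csize T = n}"

definition tAi :: "nat \<Rightarrow> (nat \<Rightarrow> nat \<Rightarrow> nat) \<Rightarrow> nat \<Rightarrow> nat \<Rightarrow> nat" where
  "tAi m A i n = card {T. valid_coloring m A T \<and> csize T = n \<and> root_color T = i}"

definition FA :: "nat \<Rightarrow> (nat \<Rightarrow> nat \<Rightarrow> nat) \<Rightarrow> real fps" where
  "FA m A = Abs_fps (\<lambda>n. if n = 0 then 0 else real (tA m A n))"

definition blockA :: "nat \<Rightarrow> nat \<Rightarrow> (nat \<Rightarrow> nat \<Rightarrow> nat) \<Rightarrow> (nat \<Rightarrow> nat \<Rightarrow> nat)
    \<Rightarrow> nat \<Rightarrow> nat \<Rightarrow> nat" where
  "blockA m1 m2 A1 A2 i j =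
     (if i < m1 \<and> j < m1 then A1 i j
      else if i < m1 \<and> m1 \<le> j \<and> j < m1 + m2 then A2 i (j - m1)
      else 0)"

definition blockA' :: "nat \<Rightarrow> nat \<Rightarrow> nat \<Rightarrow> (nat \<Rightarrow> nat \<Rightarrow> nat) \<Rightarrow> (nat \<Rightarrow> nat \<Rightarrow> nat)
    \<Rightarrow> (nat \<Rightarrow> nat \<Rightarrow> nat) \<Rightarrow> nat \<Rightarrow> nat \<Rightarrow> nat" where
  "blockA' m1 m2 m3 A1 A2 B i j =
     (if i < m1 \<and> j < m1 then A1 i j
      else if i < m1 \<and> m1 \<le> j \<and> j < m1 + m2 then A2 i (j - m1)
      else if m1 + m2 \<le> i \<and> i < m1 + m2 + m3 \<and> m1 \<le> j \<and> j < m1 + m2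
        then B (i - m1 - m2) (j - m1)
      else 0)"

end

theory Submission
  imports Defs
begin

text \<open>Colours below \<open>m\<^sub>1 + m\<^sub>2\<close> only see rows on which \<open>A'\<close> agrees with \<open>A\<close>, and
  from them only colours below \<open>m\<^sub>1 + m\<^sub>2\<close> are reachable, so the trees with such a root
  colour are the same for \<open>A\<close> and \<open>A'\<close>. A vertex of colour \<open>m\<^sub>1 + m\<^sub>2 + k\<close> can only have
  children with colours from the \<open>A\<^sub>2\<close>-block, and these have no children at all. Such a tree
  of size \<open>n\<close> is therefore a star, determined by the word of its \<open>n - 1\<close> leaf colours over
  the support of row \<open>k\<close> of \<open>B\<close>: there are \<open>(\<Sum>\<^sub>j b\<^sub>k\<^sub>j)\<^sup>n\<^sup>-\<^sup>1\<close> of them, with generating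
  function \<open>x / (1 - x \<Sum>\<^sub>j b\<^sub>k\<^sub>j)\<close>.\<close>

lemma csize_neq_0 [simp]: "csize T \<noteq> 0"
  by (cases T) simp

lemma valid_coloring_root_color: "valid_coloring m A T \<Longrightarrow> root_color T < m"
  by (cases T) simp

lemma length_le_sum_list_csize: "length ts \<le> sum_list (map csize ts)"
proof (induction ts)
  case (Cons t ts)
  then show ?case using csize_neq_0[of t] by (simp del: csize_neq_0)
qed simp

lemma finite_valid_colorings_size_le: "finite {T. valid_coloring m A T \<and> csize T \<le> n}"
proof (induction n)
  case 0
  show ?case by simp
next
  case (Suc n)
  let ?S = "{T. valid_coloring m A T \<and> csize T \<le> n}"
  have "{T. valid_coloring m A T \<and> csize T \<le> Suc n}
          \<subseteq> case_prod CNode ` ({..<m} \<times> {ts. set ts \<subseteq> ?S \<and> length ts \<le> n})"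
  proof
    fix T assume T: "T \<in> {T. valid_coloring m A T \<and> csize T \<le> Suc n}"
    obtain c ts where c_ts: "T = CNode c ts" by (cases T)
    have sum_le: "sum_list (map csize ts) \<le> n" using T c_ts by simp
    have "set ts \<subseteq> ?S"
      using T c_ts sum_le member_le_sum_list[of _ "map csize ts"] by fastforce
    moreover have "length ts \<le> n"
      using length_le_sum_list_csize[of ts] sum_le by simp
    ultimately show "T \<in> case_prod CNode ` ({..<m} \<times> {ts. set ts \<subseteq> ?S \<and> length ts \<le> n})"
      using T c_ts sum_le by force
  qed
  moreover have "finite ({..<m} \<times> {ts. set ts \<subseteq> ?S \<and> length ts \<le> n})"
    using Suc finite_lists_length_le by blast
  ultimately show ?case by (meson finite_imageI finite_subset)
qed

lemma finite_valid_colorings_size: "finite {T. valid_coloring m A T \<and> csize T = n \<and> P T}"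
  by (rule finite_subset[OF _ finite_valid_colorings_size_le[of m A n]]) auto

lemma tA_eq_sum_tAi: "tA m A n = (\<Sum>i<m. tAi m A i n)"
proof -
  have "{T. valid_coloring m A T \<and> csize T = n} =
          (\<Union>i<m. {T. valid_coloring m A T \<and> csize T = n \<and> root_color T = i})"
    using valid_coloring_root_color by blast
  then have "tA m A n = card (\<Union>i<m. {T. valid_coloring m A T \<and> csize T = n \<and> root_color T = i})"
    by (simp add: tA_def)
  also have "\<dots> = (\<Sum>i<m. tAi m A i n)"
    unfolding tAi_def by (rule card_UN_disjoint) (auto intro: finite_valid_colorings_size)
  finally show ?thesis .
qed

lemma valid_coloring_cong_closed:
  assumes "S \<subseteq> {..<m}" and "S \<subseteq> {..<m'}"
    and rows: "\<And>i j. i \<in> S \<Longrightarrow> A' i j = A i j"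
    and closed: "\<And>i j. i \<in> S \<Longrightarrow> A i j = 1 \<Longrightarrow> j \<in> S"
    and "root_color T \<in> S"
  shows "valid_coloring m' A' T = valid_coloring m A T"
  using assms(5)
proof (induction T)
  case (CNode c ts)
  then have "c \<in> S" by simp
  then have "(A' c (root_color t) = 1 \<and> valid_coloring m' A' t) =
             (A c (root_color t) = 1 \<and> valid_coloring m A t)" if "t \<in> set ts" for t
    using rows closed CNode.IH[OF that] by metis
  then show ?case using \<open>c \<in> S\<close> assms(1,2) by auto
qed

lemma tAi_cong_closed:
  assumes "S \<subseteq> {..<m}" and "S \<subseteq> {..<m'}"
    and "\<And>i j. i \<in> S \<Longrightarrow> A' i j = A i j"
    and "\<And>i j. i \<in> S \<Longrightarrow> A i j = 1 \<Longrightarrow> j \<in> S"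
    and "i \<in> S"
  shows "tAi m' A' i n = tAi m A i n"
proof -
  have "valid_coloring m' A' T = valid_coloring m A T" if "root_color T = i" for T
    by (rule valid_coloring_cong_closed[where S = S]) (use assms that in auto)
  then show ?thesis
    unfolding tAi_def by (intro arg_cong[where f = card] Collect_cong) auto
qed

definition star_ctree :: "nat \<Rightarrow> nat list \<Rightarrow> ctree" where
  "star_ctree c cs = CNode c (map (\<lambda>d. CNode d []) cs)"

lemma inj_star_ctree: "inj (star_ctree c)"
  by (rule injI) (simp add: star_ctree_def inj_map_eq_map inj_def)

lemma csize_star_ctree: "csize (star_ctree c cs) = Suc (length cs)"
  by (induction cs) (simp_all add: star_ctree_def)

lemma valid_coloring_sink:
  assumes "valid_coloring m A (CNode c ts)" and "\<And>l. l < m \<Longrightarrow> A c l \<noteq> 1"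
  shows "ts = []"
  using assms valid_coloring_root_color by (cases ts) auto

lemma valid_colorings_rooted_at_star_center:
  assumes "i < m"
    and sinks: "\<And>j l. j < m \<Longrightarrow> A i j = 1 \<Longrightarrow> l < m \<Longrightarrow> A j l \<noteq> 1"
  shows "{T. valid_coloring m A T \<and> csize T = Suc k \<and> root_color T = i} =
           star_ctree i ` {cs. set cs \<subseteq> {j. j < m \<and> A i j = 1} \<and> length cs = k}"
proof (intro equalityI subsetI)
  fix T assume T: "T \<in> {T. valid_coloring m A T \<and> csize T = Suc k \<and> root_color T = i}"
  then obtain ts where ts: "T = CNode i ts" by (cases T) auto
  have leaf: "t = CNode (root_color t) [] \<and> root_color t < m \<and> A i (root_color t) = 1"
    if "t \<in> set ts" for t
  proof -
    obtain d us where t: "t = CNode d us" by (cases t)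
    have "valid_coloring m A t" "A i d = 1" using T ts t that by auto
    then show ?thesis using t sinks valid_coloring_sink valid_coloring_root_color by fastforce
  qed
  define cs where "cs = map root_color ts"
  have "T = star_ctree i cs"
    unfolding ts star_ctree_def cs_def map_map o_def
    using leaf by (simp add: map_idI[symmetric])
  moreover have "set cs \<subseteq> {j. j < m \<and> A i j = 1}" using leaf cs_def by auto
  moreover have "length cs = k" using T \<open>T = star_ctree i cs\<close> by (simp add: csize_star_ctree)
  ultimately show "T \<in> star_ctree i ` {cs. set cs \<subseteq> {j. j < m \<and> A i j = 1} \<and> length cs = k}"
    by blast
next
  fix T assume "T \<in> star_ctree i ` {cs. set cs \<subseteq> {j. j < m \<and> A i j = 1} \<and> length cs = k}"
  then obtain cs where T: "T = star_ctree i cs"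
    and cs: "set cs \<subseteq> {j. j < m \<and> A i j = 1}" "length cs = k" by blast
  have "valid_coloring m A T" "root_color T = i"
    using cs \<open>i < m\<close> by (auto simp: T star_ctree_def)
  then show "T \<in> {T. valid_coloring m A T \<and> csize T = Suc k \<and> root_color T = i}"
    using cs by (simp add: T csize_star_ctree)
qed

lemma tAi_star_center:
  assumes "i < m"
    and "\<And>j l. j < m \<Longrightarrow> A i j = 1 \<Longrightarrow> l < m \<Longrightarrow> A j l \<noteq> 1"
    and "n \<ge> 1"
  shows "tAi m A i n = card {j. j < m \<and> A i j = 1} ^ (n - 1)"
proof -
  have "tAi m A i n =
          card (star_ctree i ` {cs. set cs \<subseteq> {j. j < m \<and> A i j = 1} \<and> length cs = n - 1})"
    unfolding tAi_def using valid_colorings_rooted_at_star_center[OF assms(1,2), where k = "n - 1"]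
      \<open>n \<ge> 1\<close> by simp
  also have "\<dots> = card {j. j < m \<and> A i j = 1} ^ (n - 1)"
    by (simp add: card_image inj_on_subset[OF inj_star_ctree] card_lists_length_eq)
  finally show ?thesis .
qed

lemma card_ones_eq_sum:
  fixes f :: "'a \<Rightarrow> nat"
  assumes "finite A" and "\<And>x. x \<in> A \<Longrightarrow> f x \<in> {0, 1}"
  shows "card {x\<in>A. f x = 1} = sum f A"
proof -
  have "sum f A = sum f {x\<in>A. f x = 1}"
    using assms by (intro sum.mono_neutral_right) fastforce+
  then show ?thesis by simp
qed

lemma sum_lessThan_add: "(\<Sum>i<a + b. f i) = (\<Sum>i<a. f i) + (\<Sum>i<b. f (a + i :: nat))"
  by (induction b) (simp_all add: add.assoc)

lemma inverse_one_minus_X_times_const: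
  "inverse (1 - fps_X * fps_const (c::'a::field)) = Abs_fps (\<lambda>n. c ^ n)"
proof (rule fps_inverse_unique, rule fps_ext)
  fix n
  have "(1 - fps_X * fps_const c) * Abs_fps (\<lambda>n. c ^ n)
          = Abs_fps (\<lambda>n. c ^ n) - fps_X * (fps_const c * Abs_fps (\<lambda>n. c ^ n))"
    by (simp add: algebra_simps)
  then show "fps_nth ((1 - fps_X * fps_const c) * Abs_fps (\<lambda>n. c ^ n)) n = fps_nth 1 n"
    by (cases n) (simp_all add: fps_mult_left_const_nth)
qed

lemma fps_nth_X_times_sum_geometric:
  "fps_nth (fps_X * (\<Sum>i<m. inverse (1 - fps_X * fps_const (c i :: 'a::field)))) n =
     (if n = 0 then 0 else \<Sum>i<m. c i ^ (n - 1))"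
  by (cases n) (simp_all add: inverse_one_minus_X_times_const fps_sum_nth)

lemma blockA'_top_rows:
  "i < m1 + m2 \<Longrightarrow> blockA' m1 m2 m3 A1 A2 B i j = blockA m1 m2 A1 A2 i j"
  unfolding blockA'_def blockA_def by auto

lemma blockA_successors_top: "blockA m1 m2 A1 A2 i j = 1 \<Longrightarrow> j < m1 + m2"
  unfolding blockA_def by (auto split: if_splits)

lemma tAi_blockA'_top:
  assumes "i < m1 + m2"
  shows "tAi (m1 + m2 + m3) (blockA' m1 m2 m3 A1 A2 B) i n
           = tAi (m1 + m2) (blockA m1 m2 A1 A2) i n"
  using assms by (intro tAi_cong_closed[where S = "{..<m1 + m2}"])
    (auto simp: blockA'_top_rows blockA_successors_top)

lemma blockA'_successors_bottom:
  assumes "k < m3"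
  shows "{j. j < m1 + m2 + m3 \<and> blockA' m1 m2 m3 A1 A2 B (m1 + m2 + k) j = 1}
           = (+) m1 ` {j\<in>{..<m2}. B k j = 1}"
  using assms by (auto simp: blockA'_def image_iff)
    (metis le_add_diff_inverse less_diff_conv2 add.commute)

lemma tAi_blockA'_bottom:
  assumes "\<forall>j<m2. B k j \<in> {0, 1}" and "k < m3" and "n \<ge> 1"
  shows "tAi (m1 + m2 + m3) (blockA' m1 m2 m3 A1 A2 B) (m1 + m2 + k) n
           = (\<Sum>j<m2. B k j) ^ (n - 1)"
proof -
  let ?A' = "blockA' m1 m2 m3 A1 A2 B"
  have "card {j. j < m1 + m2 + m3 \<and> ?A' (m1 + m2 + k) j = 1} = card {j\<in>{..<m2}. B k j = 1}"
    using blockA'_successors_bottom[OF \<open>k < m3\<close>] by (simp add: card_image)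
  also have "\<dots> = (\<Sum>j<m2. B k j)"
    using assms(1) by (intro card_ones_eq_sum) auto
  finally have successors:
    "card {j. j < m1 + m2 + m3 \<and> ?A' (m1 + m2 + k) j = 1} = (\<Sum>j<m2. B k j)" .
  have sinks: "?A' j l \<noteq> 1" if "?A' (m1 + m2 + k) j = 1" for j l
    using that by (auto simp: blockA'_def split: if_splits)
  show ?thesis
    using assms successors sinks by (subst tAi_star_center) auto
qed

lemma tA_blockA':
  assumes "\<forall>i<m3. \<forall>j<m2. B i j \<in> {0, 1}"
  shows "tA (m1 + m2 + m3) (blockA' m1 m2 m3 A1 A2 B) (Suc n)
           = tA (m1 + m2) (blockA m1 m2 A1 A2) (Suc n) + (\<Sum>i<m3. (\<Sum>j<m2. B i j) ^ n)"
  using assms tAi_blockA'_top tAi_blockA'_bottom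
  by (simp add: tA_eq_sum_tAi sum_lessThan_add)

lemma FA_blockA':
  assumes "\<forall>i<m3. \<forall>j<m2. B i j \<in> {0, 1}"
  shows "FA (m1 + m2 + m3) (blockA' m1 m2 m3 A1 A2 B) = FA (m1 + m2) (blockA m1 m2 A1 A2)
           + fps_X * (\<Sum>i<m3. inverse (1 - fps_X * fps_const (real (\<Sum>j<m2. B i j))))"
    (is "?lhs = ?rhs")
proof (rule fps_ext)
  fix n
  show "fps_nth ?lhs n = fps_nth ?rhs n"
    unfolding fps_add_nth fps_nth_X_times_sum_geometric
    using tA_blockA'[OF assms] by (cases n) (simp_all add: FA_def)
qed

theorem theorem31:
  fixes m1 m2 m3 :: nat and A1 A2 B :: "nat \<Rightarrow> nat \<Rightarrow> nat"
  assumes "m1 > 0" and "m2 > 0" and "m3 > 0"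
    and "\<forall>i<m1. \<forall>j<m1. A1 i j \<in> {0,1}"
    and "\<forall>i<m1. \<forall>j<m2. A2 i j \<in> {0,1}"
    and "\<forall>i<m3. \<forall>j<m2. B i j \<in> {0,1}"
  shows "FA (m1 + m2 + m3) (blockA' m1 m2 m3 A1 A2 B) =
           FA (m1 + m2) (blockA m1 m2 A1 A2)
           + fps_X * (\<Sum>i<m3. inverse (1 - fps_X * fps_const (real (\<Sum>j<m2. B i j))))
    \<and> (\<forall>i < m1 + m2. \<forall>n \<ge> 1.
           tAi (m1 + m2 + m3) (blockA' m1 m2 m3 A1 A2 B) i n = tAi (m1 + m2) (blockA m1 m2 A1 A2) i n)
    \<and> (\<forall>i. m1 + m2 \<le> i \<and> i < m1 + m2 + m3 \<longrightarrow> (\<forall>n \<ge> 1.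
           tAi (m1 + m2 + m3) (blockA' m1 m2 m3 A1 A2 B) i n = (\<Sum>j<m2. B (i - m1 - m2) j) ^ (n - 1)))"
proof -
  \<comment> \<open>Only the 0/1 entries of \<open>B\<close> matter.\<close>
  have bottom: "tAi (m1 + m2 + m3) (blockA' m1 m2 m3 A1 A2 B) i n = (\<Sum>j<m2. B (i - m1 - m2) j) ^ (n - 1)"
    if "m1 + m2 \<le> i" "i < m1 + m2 + m3" "n \<ge> 1" for i n
  proof -
    obtain k where "i = m1 + m2 + k" using \<open>m1 + m2 \<le> i\<close> le_Suc_ex by blast
    then show ?thesis using tAi_blockA'_bottom assms(6) that by simp
  qed
  show ?thesis using FA_blockA'[OF assms(6)] tAi_blockA'_top bottom by blast
qed

end
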